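(* For each $s\ge0$, $\big(\mathrm{ad}(\Omega_0)+\mu(\Omega')\big)^s(\mathbf 1\otimes\mathbf I)$ belongs to $\mathcal B^0\otimes\mathcal U(\mathfrak X)$.
   Context: $\mathfrak X$ is the complex Lie algebra generated by $Z_1,Z_{11},Z_2,Z_{22},Z_{12}$ subject only to $[Z_1,Z_2]=[Z_{11},Z_2]=[Z_1,Z_{22}]=0$ and $[Z_{11},Z_{22}]=-[Z_{11},Z_{12}]=[Z_{22},Z_{12}]=-[Z_1-Z_2,Z_{12}]$; $\mathcal U(\mathfrak X)$ its universal enveloping algebra with unit $\mathbf I$. On $\mathbf P^1\times\mathbf P^1$: $\zeta_i=dz_i/z_i$, $\zeta_{ii}=dz_i/(1-z_i)$ ($i=1,2$), $\zeta_{12}=d(z_1z_2)/(1-z_1z_2)$. $S(A)$, $A=\{\zeta_1,\zeta_{11},\zeta_2,\zeta_{22},\zeta_{12}\}$, is the space with basis the words in $A$ (empty word $\mathbf 1$), with concatenation $\circ$. An element $\sum_Ic_I\omega_{i_1}\circ\cdots\circ\omega_{i_s}\in S_s(A)$ satisfies Chen's integrability condition if for each $1\le l<s$, $\sum_Ic_I\omega_{i_1}\otimes\cdots\otimes(\omega_{i_l}\wedge\omega_{i_{l+1}})\otimes\cdots\otimes\omega_{i_s}=0$ as a multiple differential form; $\mathcal B$ is the span of homogeneous elements satisfying this, and $\mathcal B^0$ the subspace of elements none of whose words ends in $\zeta_1$ or $\zeta_2$. On $S(A)\otimes\mathcal U(\mathfrak X)$: $\mathrm{ad}(\omega\otimes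 X)(\varphi\otimes F)=(\omega\circ\varphi)\otimes[X,F]$, $\mu(\omega\otimes X)(\varphi\otimes F)=(\omega\circ\varphi)\otimes XF$ (letters $\omega$, $X\in\mathfrak X$), extended linearly; $\Omega_0=\zeta_1\otimes Z_1+\zeta_2\otimes Z_2$, $\Omega'=\zeta_{11}\otimes Z_{11}+\zeta_{22}\otimes Z_{22}+\zeta_{12}\otimes Z_{12}$. *)

theory Defs
  imports Complex_Main
begin

text \<open>Index set for the five letters of A = {zeta_1, zeta_11, zeta_2, zeta_22, zeta_12}
  and simultaneously for the five generators Z_1, Z_11, Z_2, Z_22, Z_12 of the Lie algebra X.\<close>
datatype idx = I1 | I11 | I2 | I22 | I12

text \<open>Elements of the free associative algebra on Z_1,...,Z_12 (coefficient functions on words;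
  the genuine elements are the finitely supported ones), and of S(A) (x) (free algebra).\<close>
type_synonym fa = "idx list \<Rightarrow> complex"
type_synonym tens = "idx list \<Rightarrow> fa"

definition fin_supp :: "('a \<Rightarrow> complex) \<Rightarrow> bool" where
  "fin_supp f \<longleftrightarrow> finite {u. f u \<noteq> 0}"

definition fa_add :: "fa \<Rightarrow> fa \<Rightarrow> fa" where
  "fa_add f g = (\<lambda>u. f u + g u)"

definition fa_diff :: "fa \<Rightarrow> fa \<Rightarrow> fa" where
  "fa_diff f g = (\<lambda>u. f u - g u)"

definition fa_mul :: "fa \<Rightarrow> fa \<Rightarrow> fa" where
  "fa_mul f g = (\<lambda>w. \<Sum>i\<le>length w. f (take i w) * g (drop i w))"

definition fa_mono :: "idx list \<Rightarrow> fa" where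
  "fa_mono v = (\<lambda>u. if u = v then 1 else 0)"

definition Zg :: "idx \<Rightarrow> fa" where
  "Zg i = fa_mono [i]"

definition fa_one :: fa where
  "fa_one = fa_mono []"

definition fa_comm :: "fa \<Rightarrow> fa \<Rightarrow> fa" where
  "fa_comm x y = fa_diff (fa_mul x y) (fa_mul y x)"

text \<open>Defining relations of X, written as elements of the free associative algebra
  (brackets are commutators).\<close>
definition U_rels :: "fa set" where
  "U_rels = {fa_comm (Zg I1) (Zg I2),
             fa_comm (Zg I11) (Zg I2),
             fa_comm (Zg I1) (Zg I22),
             fa_add (fa_comm (Zg I11) (Zg I22)) (fa_comm (Zg I11) (Zg I12)),
             fa_diff (fa_comm (Zg I11) (Zg I22)) (fa_comm (Zg I22) (Zg I12)),
             fa_add (fa_comm (Zg I11) (Zg I22)) (fa_comm (fa_diff (Zg I1) (Zg I2)) (Zg I12))}"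

inductive_set cspan :: "('a \<Rightarrow> complex) set \<Rightarrow> ('a \<Rightarrow> complex) set" for G where
  cspan_zero: "(\<lambda>_. 0) \<in> cspan G"
| cspan_step: "g \<in> G \<Longrightarrow> f \<in> cspan G \<Longrightarrow> (\<lambda>u. c * g u + f u) \<in> cspan G"

text \<open>The two-sided ideal J generated by the relations; U(X) = free algebra / J.\<close>
definition U_ideal :: "fa set" where
  "U_ideal = cspan {fa_mul (fa_mul u r) v | u r v. fin_supp u \<and> fin_supp v \<and> r \<in> U_rels}"

inductive_set tspan :: "tens set \<Rightarrow> tens set" for G where
  tspan_zero: "(\<lambda>_ _. 0) \<in> tspan G"
| tspan_step: "g \<in> G \<Longrightarrow> t \<in> tspan G \<Longrightarrow> (\<lambda>w u. c * g w u + t w u) \<in> tspan G"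

text \<open>Coefficients of the 1-forms in the affine chart (z1,z2) of P^1 x P^1:
  coef a p False = coefficient of dz1, coef a p True = coefficient of dz2.\<close>
definition coef :: "idx \<Rightarrow> complex \<times> complex \<Rightarrow> bool \<Rightarrow> complex" where
  "coef a p j = (let z1 = fst p; z2 = snd p in
     (case a of
        I1  \<Rightarrow> if j then 0 else 1 / z1
      | I11 \<Rightarrow> if j then 0 else 1 / (1 - z1)
      | I2  \<Rightarrow> if j then 1 / z2 else 0
      | I22 \<Rightarrow> if j then 1 / (1 - z2) else 0
      | I12 \<Rightarrow> if j then z1 / (1 - z1 * z2) else z2 / (1 - z1 * z2)))"

text \<open>Coefficient of dz1 /\ dz2 in zeta_a /\ zeta_b.\<close>
definition wedge :: "idx \<Rightarrow> idx \<Rightarrow> complex \<times> complex \<Rightarrow> complex" where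
  "wedge a b p = coef a p False * coef b p True - coef a p True * coef b p False"

text \<open>Points of the chart where all forms are holomorphic.\<close>
definition goodpt :: "complex \<times> complex \<Rightarrow> bool" where
  "goodpt p \<longleftrightarrow> fst p \<noteq> 0 \<and> fst p \<noteq> 1 \<and> snd p \<noteq> 0 \<and> snd p \<noteq> 1 \<and> fst p * snd p \<noteq> 1"

text \<open>The multiple form omega_{i_1} (x) ... (x) (omega_{i_l} /\ omega_{i_{l+1}}) (x) ... (x) omega_{i_s}
  (1-based l), realised as a function of one point per tensor slot (slots 0..s-2) and a choice of
  component (dz1 or dz2) for each 1-form slot.\<close>
definition mform :: "idx list \<Rightarrow> nat \<Rightarrow> (nat \<Rightarrow> complex \<times> complex) \<Rightarrow> (nat \<Rightarrow> bool) \<Rightarrow> complex" where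
  "mform I l x j =
     (\<Prod>k<l - 1. coef (I ! k) (x k) (j k)) *
     wedge (I ! (l - 1)) (I ! l) (x (l - 1)) *
     (\<Prod>k\<in>{l..<length I - 1}. coef (I ! Suc k) (x k) (j k))"

definition homogeneous :: "(idx list \<Rightarrow> complex) \<Rightarrow> nat \<Rightarrow> bool" where
  "homogeneous c s \<longleftrightarrow> (\<forall>w. c w \<noteq> 0 \<longrightarrow> length w = s)"

definition chen :: "(idx list \<Rightarrow> complex) \<Rightarrow> nat \<Rightarrow> bool" where
  "chen c s \<longleftrightarrow> (\<forall>l. 1 \<le> l \<and> l < s \<longrightarrow>
      (\<forall>x j. (\<forall>k. goodpt (x k)) \<longrightarrow>
         (\<Sum>I\<in>{I. length I = s}. c I * mform I l x j) = 0))"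

definition chenB :: "(idx list \<Rightarrow> complex) set" where
  "chenB = cspan {c. \<exists>s. homogeneous c s \<and> chen c s}"

definition chenB0 :: "(idx list \<Rightarrow> complex) set" where
  "chenB0 = {b \<in> chenB. \<forall>w. b w \<noteq> 0 \<longrightarrow> w \<noteq> [] \<longrightarrow> last w \<notin> {I1, I2}}"

text \<open>Membership of (the image in S(A) (x) U(X) of) a tensor in B^0 (x) U(X):
  it differs from an element of B^0 (x) (free algebra) by an element of S(A) (x) J.\<close>
definition in_B0_U :: "tens \<Rightarrow> bool" where
  "in_B0_U T \<longleftrightarrow> (\<exists>y z.
      y \<in> tspan {(\<lambda>w u. b w * F u) | b F. b \<in> chenB0 \<and> fin_supp F} \<and>
      finite {w. z w \<noteq> (\<lambda>_. 0)} \<and> (\<forall>w. z w \<in> U_ideal) \<and>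
      T = (\<lambda>w u. y w u + z w u))"

definition ad_lt :: "idx \<Rightarrow> fa \<Rightarrow> tens \<Rightarrow> tens" where
  "ad_lt a X T = (\<lambda>w. case w of [] \<Rightarrow> (\<lambda>_. 0)
                    | b # v \<Rightarrow> if b = a then fa_comm X (T v) else (\<lambda>_. 0))"

definition mu_lt :: "idx \<Rightarrow> fa \<Rightarrow> tens \<Rightarrow> tens" where
  "mu_lt a X T = (\<lambda>w. case w of [] \<Rightarrow> (\<lambda>_. 0)
                    | b # v \<Rightarrow> if b = a then fa_mul X (T v) else (\<lambda>_. 0))"

definition tens_add :: "tens \<Rightarrow> tens \<Rightarrow> tens" where
  "tens_add S T = (\<lambda>w u. S w u + T w u)"

text \<open>ad(Omega_0) + mu(Omega').\<close>
definition Lop :: "tens \<Rightarrow> tens" where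
  "Lop T = tens_add (tens_add (ad_lt I1 (Zg I1) T) (ad_lt I2 (Zg I2) T))
             (tens_add (mu_lt I11 (Zg I11) T)
               (tens_add (mu_lt I22 (Zg I22) T) (mu_lt I12 (Zg I12) T)))"

text \<open>1 (x) I.\<close>
definition unitT :: tens where
  "unitT = (\<lambda>w. if w = [] then fa_one else (\<lambda>_. 0))"

end

theory Submission
  imports Defs
begin

text \<open>The coefficient of a word \<open>a\<^sub>1\<dots>a\<^sub>s\<close> in \<open>(ad(\<Omega>\<^sub>0) + \<mu>(\<Omega>'))\<^sup>s(\<one> \<otimes> I)\<close> is
  \<open>P\<^sub>a\<^sub>1(\<dots>P\<^sub>a\<^sub>s(1))\<close>, where \<open>P\<^sub>a\<close> is the commutator with \<open>Z\<^sub>a\<close> for \<open>a \<in> {1, 2}\<close> and left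
  multiplication by \<open>Z\<^sub>a\<close> otherwise; it vanishes when the last letter is \<open>\<zeta>\<^sub>1\<close> or \<open>\<zeta>\<^sub>2\<close>.
  Pairing the coefficients with Chen's multiple form carrying \<open>\<zeta>\<^sub>a \<and> \<zeta>\<^sub>b\<close> in slots \<open>l, l+1\<close>
  reduces, after the outer letters are moved out, to \<open>\<Sum>\<^sub>a\<^sub>,\<^sub>b (\<zeta>\<^sub>a \<and> \<zeta>\<^sub>b) P\<^sub>a P\<^sub>b G = W G + G W'\<close>
  with \<open>W = \<Sum>\<^sub>a\<^sub>,\<^sub>b (\<zeta>\<^sub>a \<and> \<zeta>\<^sub>b) Z\<^sub>a Z\<^sub>b\<close>. The defining relations of \<open>\<X>\<close> are exactly the
  coefficients of \<open>\<Omega> \<and> \<Omega>\<close>, so \<open>W\<close> and \<open>W'\<close> lie in the ideal \<open>J\<close> with \<open>\<U>(\<X>) = T(\<X>)/J\<close>.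
  Hence the coefficients satisfy, modulo \<open>J\<close>, every linear constraint cutting out \<open>\<B>\<^sup>0\<close> in
  degree \<open>s\<close>, and Gaussian elimination over the finitely many words of length \<open>s\<close> splits the
  element into a part in \<open>\<B>\<^sup>0 \<otimes> T(\<X>)\<close> and a part in \<open>S(A) \<otimes> J\<close>.\<close>

lemma UNIV_idx: "(UNIV :: idx set) = {I1, I11, I2, I22, I12}"
  using idx.exhaust by auto

instance idx :: finite
  by standard (simp add: UNIV_idx)

lemma fa_mul_assoc: "fa_mul (fa_mul f g) h = fa_mul f (fa_mul g h)"
proof (rule ext)
  fix w :: "idx list"
  define n where "n = length w"
  define F where "F = (\<lambda>j k. f (take j w) * g (take k (drop j w)) * h (drop (j + k) w))"
  have L: "fa_mul (fa_mul f g) h w = (\<Sum>i\<le>n. \<Sum>j\<le>i. F j (i - j))"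
    unfolding fa_mul_def n_def[symmetric]
  proof (rule sum.cong[OF refl])
    fix i assume "i \<in> {..n}"
    hence "length (take i w) = i" using n_def by simp
    thus "(\<Sum>j\<le>length (take i w). f (take j (take i w)) * g (drop j (take i w))) * h (drop i w) =
          (\<Sum>j\<le>i. F j (i - j))"
      unfolding F_def by (auto simp: sum_distrib_right drop_take min_def intro!: sum.cong)
  qed
  have R: "fa_mul f (fa_mul g h) w = (\<Sum>j\<le>n. \<Sum>k\<le>n-j. F j k)"
    unfolding fa_mul_def n_def[symmetric]
    by (auto simp: sum_distrib_left F_def n_def add.commute mult.assoc intro!: sum.cong)
  have "(\<Sum>i\<le>n. \<Sum>j\<le>i. F j (i - j)) = (\<Sum>(j,k)\<in>{(j,k). j+k \<le> n}. F j k)"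
    by (rule sum.triangle_reindex_eq[symmetric])
  also have "{(j,k). j+k \<le> n} = Sigma {..n} (\<lambda>j. {..n-j})" by auto
  also have "(\<Sum>(j,k)\<in>Sigma {..n} (\<lambda>j. {..n-j}). F j k) = (\<Sum>j\<le>n. \<Sum>k\<le>n-j. F j k)"
    by (rule sum.Sigma[symmetric]) auto
  finally show "fa_mul (fa_mul f g) h w = fa_mul f (fa_mul g h) w" using L R by simp
qed

lemma fa_mul_one_left: "fa_mul fa_one f = f"
proof (rule ext)
  fix w :: "idx list"
  have "fa_mul fa_one f w = (\<Sum>i\<le>length w. if i = 0 then f w else 0)"
    unfolding fa_mul_def fa_one_def fa_mono_def by (rule sum.cong) auto
  thus "fa_mul fa_one f w = f w" by simp
qed

lemma fa_mul_one_right: "fa_mul f fa_one = f"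
proof (rule ext)
  fix w :: "idx list"
  have "fa_mul f fa_one w = (\<Sum>i\<le>length w. if i = length w then f w else 0)"
    unfolding fa_mul_def fa_one_def fa_mono_def by (rule sum.cong) auto
  thus "fa_mul f fa_one w = f w" by simp
qed

lemma fa_mul_add_right: "fa_mul f (fa_add g h) = fa_add (fa_mul f g) (fa_mul f h)"
  unfolding fa_mul_def fa_add_def by (auto simp: distrib_left sum.distrib)

lemma fa_mul_add_left: "fa_mul (fa_add g h) f = fa_add (fa_mul g f) (fa_mul h f)"
  unfolding fa_mul_def fa_add_def by (auto simp: distrib_right sum.distrib)

lemma fa_mul_zero_right[simp]: "fa_mul f (\<lambda>_. 0) = (\<lambda>_. 0)"
  unfolding fa_mul_def by simp

lemma fa_mul_zero_left[simp]: "fa_mul (\<lambda>_. 0) f = (\<lambda>_. 0)"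
  unfolding fa_mul_def by simp

lemma fa_mul_smult_right: "fa_mul f (\<lambda>u. c * g u) = (\<lambda>u. c * fa_mul f g u)"
  unfolding fa_mul_def by (auto simp: sum_distrib_left algebra_simps)

lemma fa_mul_smult_left: "fa_mul (\<lambda>u. c * g u) f = (\<lambda>u. c * fa_mul g f u)"
  unfolding fa_mul_def by (auto simp: sum_distrib_left algebra_simps)

lemma fin_supp_mono: "fin_supp (fa_mono v)"
  unfolding fin_supp_def fa_mono_def by (rule finite_subset[of _ "{v}"]) auto

lemma fin_supp_add: "fin_supp f \<Longrightarrow> fin_supp g \<Longrightarrow> fin_supp (\<lambda>u. f u + g u)"
  unfolding fin_supp_def
  by (rule finite_subset[of _ "{u. f u \<noteq> 0} \<union> {u. g u \<noteq> 0}"]) auto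

lemma fin_supp_smult: "fin_supp f \<Longrightarrow> fin_supp (\<lambda>u. c * f u)"
  unfolding fin_supp_def by (rule finite_subset[of _ "{u. f u \<noteq> 0}"]) auto

lemma fin_supp_fa_mul: "fin_supp f \<Longrightarrow> fin_supp g \<Longrightarrow> fin_supp (fa_mul f g)"
  unfolding fin_supp_def
proof (rule finite_subset)
  show "{w. fa_mul f g w \<noteq> 0} \<subseteq> (\<lambda>(u,v). u @ v) ` ({u. f u \<noteq> 0} \<times> {v. g v \<noteq> 0})"
  proof
    fix w assume "w \<in> {w. fa_mul f g w \<noteq> 0}"
    then obtain i where "f (take i w) * g (drop i w) \<noteq> 0"
      unfolding fa_mul_def by (auto intro: sum.not_neutral_contains_not_neutral)
    hence "(take i w, drop i w) \<in> {u. f u \<noteq> 0} \<times> {v. g v \<noteq> 0}" by simp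
    thus "w \<in> (\<lambda>(u,v). u @ v) ` ({u. f u \<noteq> 0} \<times> {v. g v \<noteq> 0})"
      by (metis (no_types, lifting) append_take_drop_id case_prod_conv image_eqI)
  qed
qed (intro finite_imageI finite_cartesian_product; assumption)

typedef falg = "UNIV :: fa set" morphisms coeffs Abs_falg by simp
setup_lifting type_definition_falg

instantiation falg :: ring_1
begin
lift_definition zero_falg :: falg is "\<lambda>_. 0" .
lift_definition one_falg :: falg is fa_one .
lift_definition plus_falg :: "falg \<Rightarrow> falg \<Rightarrow> falg" is fa_add .
lift_definition minus_falg :: "falg \<Rightarrow> falg \<Rightarrow> falg" is fa_diff .
lift_definition uminus_falg :: "falg \<Rightarrow> falg" is "\<lambda>f u. - f u" .
lift_definition times_falg :: "falg \<Rightarrow> falg \<Rightarrow> falg" is fa_mul .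
instance
proof
  fix a b c :: falg
  show "a * b * c = a * (b * c)" by transfer (rule fa_mul_assoc)
  show "1 * a = a" by transfer (rule fa_mul_one_left)
  show "a * 1 = a" by transfer (rule fa_mul_one_right)
  show "(a + b) * c = a * c + b * c" by transfer (rule fa_mul_add_left)
  show "a * (b + c) = a * b + a * c" by transfer (rule fa_mul_add_right)
  show "a + b + c = a + (b + c)" by transfer (auto simp: fa_add_def)
  show "a + b = b + a" by transfer (auto simp: fa_add_def)
  show "0 + a = a" by transfer (auto simp: fa_add_def)
  show "- a + a = 0" by transfer (auto simp: fa_add_def)
  show "a - b = a + - b" by transfer (auto simp: fa_add_def fa_diff_def)
  show "(0::falg) \<noteq> 1" by transfer (auto simp: fa_one_def fa_mono_def fun_eq_iff)
qed
end

lift_definition smul :: "complex \<Rightarrow> falg \<Rightarrow> falg" is "\<lambda>c f u. c * f u" .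
lift_definition Z :: "idx \<Rightarrow> falg" is Zg .

lemma smul_mult_left[simp]: "smul c x * y = smul c (x * y)"
  by transfer (rule fa_mul_smult_left)
lemma smul_mult_right[simp]: "x * smul c y = smul c (x * y)"
  by transfer (rule fa_mul_smult_right)
lemma smul_add[simp]: "smul c (x + y) = smul c x + smul c y"
  by transfer (auto simp: fa_add_def algebra_simps)
lemma smul_diff[simp]: "smul c (x - y) = smul c x - smul c y"
  by transfer (auto simp: fa_diff_def algebra_simps)
lemma smul_add_left: "smul (c + d) x = smul c x + smul d x"
  by transfer (auto simp: fa_add_def algebra_simps)
lemma smul_smul[simp]: "smul c (smul d x) = smul (c * d) x"
  by transfer auto
lemma smul_one[simp]: "smul 1 x = x"
  by transfer auto
lemma smul_zero_left[simp]: "smul 0 x = 0"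
  by transfer auto
lemma smul_zero_right[simp]: "smul c 0 = 0"
  by transfer auto
lemma smul_minus_left: "smul (- c) x = - smul c x"
  by transfer auto
lemma smul_sum: "smul c (sum f A) = (\<Sum>a\<in>A. smul c (f a))"
  by (induction A rule: infinite_finite_induct) auto

lemma coeffs_sum: "coeffs (sum f A) = (\<lambda>u. \<Sum>a\<in>A. coeffs (f a) u)"
  by (induction A rule: infinite_finite_induct)
     (auto simp: zero_falg.rep_eq plus_falg.rep_eq fa_add_def)

definition finsupp :: "falg \<Rightarrow> bool" where "finsupp x \<longleftrightarrow> fin_supp (coeffs x)"

lemma finsupp_one[simp]: "finsupp 1"
  unfolding finsupp_def by (simp add: one_falg.rep_eq fa_one_def fin_supp_mono)
lemma finsupp_Z[simp]: "finsupp (Z a)"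
  unfolding finsupp_def by (simp add: Z.rep_eq Zg_def fin_supp_mono)
lemma finsupp_add[simp]: "finsupp x \<Longrightarrow> finsupp y \<Longrightarrow> finsupp (x + y)"
  unfolding finsupp_def by (simp add: plus_falg.rep_eq fa_add_def fin_supp_add)
lemma finsupp_smul[simp]: "finsupp x \<Longrightarrow> finsupp (smul c x)"
  unfolding finsupp_def by (simp add: smul.rep_eq fin_supp_smult)
lemma finsupp_diff[simp]: "finsupp x \<Longrightarrow> finsupp y \<Longrightarrow> finsupp (x - y)"
  by (metis diff_conv_add_uminus finsupp_add finsupp_smul smul_minus_left smul_one)
lemma finsupp_mult[simp]: "finsupp x \<Longrightarrow> finsupp y \<Longrightarrow> finsupp (x * y)"
  unfolding finsupp_def by (simp add: times_falg.rep_eq fin_supp_fa_mul)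

lemma cspan_add: "f \<in> cspan G \<Longrightarrow> g \<in> cspan G \<Longrightarrow> (\<lambda>u. f u + g u) \<in> cspan G"
proof (induction f rule: cspan.induct)
  case (cspan_step g0 f c)
  have "(\<lambda>u. c * g0 u + f u + g u) = (\<lambda>u. c * g0 u + (f u + g u))" by (simp add: algebra_simps)
  thus ?case using cspan_step by (simp add: cspan.cspan_step)
qed simp

lemma cspan_smult: "f \<in> cspan G \<Longrightarrow> (\<lambda>u. c * f u) \<in> cspan G"
proof (induction f rule: cspan.induct)
  case cspan_zero thus ?case by (simp add: cspan.cspan_zero)
next
  case (cspan_step g0 f d)
  have "(\<lambda>u. c * (d * g0 u + f u)) = (\<lambda>u. (c * d) * g0 u + c * f u)" by (simp add: algebra_simps)
  thus ?case using cspan_step by (simp add: cspan.cspan_step)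
qed

lemma cspan_gen: "g \<in> G \<Longrightarrow> g \<in> cspan G"
  using cspan.cspan_step[of g G "\<lambda>_. 0" 1] by (simp add: cspan.cspan_zero)

lemma cspan_sum:
  "finite A \<Longrightarrow> (\<And>i. i \<in> A \<Longrightarrow> f i \<in> cspan G) \<Longrightarrow> (\<lambda>u. \<Sum>i\<in>A. c i * f i u) \<in> cspan G"
proof (induction A rule: finite_induct)
  case empty thus ?case by (simp add: cspan.cspan_zero)
next
  case (insert i A)
  hence "(\<lambda>u. c i * f i u + (\<Sum>i\<in>A. c i * f i u)) \<in> cspan G"
    by (intro cspan_add cspan_smult) auto
  thus ?case using insert by simp
qed

lemma U_ideal_mul_left:
  assumes "f \<in> U_ideal" "fin_supp x" shows "fa_mul x f \<in> U_ideal"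
  using assms(1) unfolding U_ideal_def
proof (induction f rule: cspan.induct)
  case cspan_zero thus ?case by (simp add: cspan.cspan_zero)
next
  case (cspan_step g f c)
  then obtain u r v where g: "g = fa_mul (fa_mul u r) v" "fin_supp u" "fin_supp v" "r \<in> U_rels"
    by auto
  have "fa_mul x g = fa_mul (fa_mul (fa_mul x u) r) v" unfolding g by (simp add: fa_mul_assoc)
  hence g': "fa_mul x g \<in> {fa_mul (fa_mul u r) v |u r v. fin_supp u \<and> fin_supp v \<and> r \<in> U_rels}"
    using g assms(2) fin_supp_fa_mul by blast
  have "fa_mul x (\<lambda>u. c * g u + f u) = (\<lambda>u. c * fa_mul x g u + fa_mul x f u)"
    using fa_mul_add_right[of x "\<lambda>u. c * g u" f] fa_mul_smult_right[of x c g]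
    by (simp add: fa_add_def)
  thus ?case using cspan_step g' by (simp add: cspan.cspan_step)
qed

lemma U_ideal_mul_right:
  assumes "f \<in> U_ideal" "fin_supp x" shows "fa_mul f x \<in> U_ideal"
  using assms(1) unfolding U_ideal_def
proof (induction f rule: cspan.induct)
  case cspan_zero thus ?case by (simp add: cspan.cspan_zero)
next
  case (cspan_step g f c)
  then obtain u r v where g: "g = fa_mul (fa_mul u r) v" "fin_supp u" "fin_supp v" "r \<in> U_rels"
    by auto
  have "fa_mul g x = fa_mul (fa_mul u r) (fa_mul v x)" unfolding g by (simp add: fa_mul_assoc)
  hence g': "fa_mul g x \<in> {fa_mul (fa_mul u r) v |u r v. fin_supp u \<and> fin_supp v \<and> r \<in> U_rels}"
    using g assms(2) fin_supp_fa_mul by blast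
  have "fa_mul (\<lambda>u. c * g u + f u) x = (\<lambda>u. c * fa_mul g x u + fa_mul f x u)"
    using fa_mul_add_left[of "\<lambda>u. c * g u" f x] fa_mul_smult_left[of c g x]
    by (simp add: fa_add_def)
  thus ?case using cspan_step g' by (simp add: cspan.cspan_step)
qed

definition in_J :: "falg \<Rightarrow> bool" where "in_J x \<longleftrightarrow> coeffs x \<in> U_ideal"

lemma in_J_add: "in_J x \<Longrightarrow> in_J y \<Longrightarrow> in_J (x + y)"
  unfolding in_J_def U_ideal_def by (simp add: plus_falg.rep_eq fa_add_def cspan_add)
lemma in_J_smul: "in_J x \<Longrightarrow> in_J (smul c x)"
  unfolding in_J_def U_ideal_def by (simp add: smul.rep_eq cspan_smult)
lemma in_J_diff: "in_J x \<Longrightarrow> in_J y \<Longrightarrow> in_J (x - y)"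
  by (metis diff_conv_add_uminus in_J_add in_J_smul smul_minus_left smul_one)
lemma in_J_sum: "(\<And>a. a \<in> A \<Longrightarrow> in_J (f a)) \<Longrightarrow> in_J (sum f A)"
proof (induction A rule: infinite_finite_induct)
  case (infinite A)
  thus ?case unfolding in_J_def U_ideal_def by (simp add: zero_falg.rep_eq cspan.cspan_zero)
next
  case empty
  thus ?case unfolding in_J_def U_ideal_def by (simp add: zero_falg.rep_eq cspan.cspan_zero)
qed (simp add: in_J_add)
lemma in_J_mult_left: "in_J x \<Longrightarrow> finsupp u \<Longrightarrow> in_J (u * x)"
  unfolding in_J_def finsupp_def by (simp add: times_falg.rep_eq U_ideal_mul_left)
lemma in_J_mult_right: "in_J x \<Longrightarrow> finsupp u \<Longrightarrow> in_J (x * u)"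
  unfolding in_J_def finsupp_def by (simp add: times_falg.rep_eq U_ideal_mul_right)

lemma in_J_relation: "coeffs x \<in> U_rels \<Longrightarrow> in_J x"
  unfolding in_J_def U_ideal_def
proof (rule cspan_gen)
  assume "coeffs x \<in> U_rels"
  moreover have "coeffs x = fa_mul (fa_mul fa_one (coeffs x)) fa_one"
    by (simp add: fa_mul_one_left fa_mul_one_right)
  moreover have "fin_supp fa_one" by (simp add: fa_one_def fin_supp_mono)
  ultimately show "coeffs x \<in> {fa_mul (fa_mul u r) v |u r v. fin_supp u \<and> fin_supp v \<and> r \<in> U_rels}"
    by blast
qed

section \<open>The coefficients of the iterated operator\<close>

definition eps :: "idx \<Rightarrow> complex" where
  "eps a = (if a = I1 \<or> a = I2 then 1 else 0)"

definition act :: "idx \<Rightarrow> falg \<Rightarrow> falg" where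
  "act a g = Z a * g - smul (eps a) (g * Z a)"

fun word_coeff :: "idx list \<Rightarrow> falg" where
  "word_coeff [] = 1"
| "word_coeff (a # v) = act a (word_coeff v)"

lemma act_zero[simp]: "act a 0 = 0"
  unfolding act_def by simp
lemma act_add: "act a (x + y) = act a x + act a y"
  unfolding act_def by (simp add: algebra_simps)
lemma act_smul: "act a (smul c x) = smul c (act a x)"
  unfolding act_def by (simp add: mult.commute)
lemma act_sum: "act a (sum f A) = (\<Sum>i\<in>A. act a (f i))"
  by (induction A rule: infinite_finite_induct) (auto simp: act_add)
lemma finsupp_act[simp]: "finsupp g \<Longrightarrow> finsupp (act a g)"
  unfolding act_def by simp
lemma in_J_act: "in_J g \<Longrightarrow> in_J (act a g)"
  unfolding act_def by (intro in_J_diff in_J_smul in_J_mult_left in_J_mult_right) auto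
lemma finsupp_word_coeff[simp]: "finsupp (word_coeff w)"
  by (induction w) auto

lemma act_act:
  "act a (act b G) = Z a * Z b * G - smul (eps b) (Z a * G * Z b) - smul (eps a) (Z b * G * Z a)
     + smul (eps a * eps b) (G * Z b * Z a)"
  unfolding act_def
  by (simp only: right_diff_distrib left_diff_distrib smul_mult_left smul_mult_right smul_diff
      smul_smul mult.assoc) (simp add: diff_diff_eq2 diff_add_eq mult.commute)

lemma word_coeff_last_letter_zero:
  "w \<noteq> [] \<Longrightarrow> last w \<in> {I1, I2} \<Longrightarrow> word_coeff w = 0"
proof (induction w)
  case (Cons a v)
  show ?case
  proof (cases "v = []")
    case True
    hence "eps a = 1" using Cons by (auto simp: eps_def)
    thus ?thesis using True by (simp add: act_def)
  next
    case False thus ?thesis using Cons by (simp add: act_def)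
  qed
qed simp

lemma coeffs_act:
  "coeffs (act a g) = (if a = I1 \<or> a = I2 then fa_comm (Zg a) (coeffs g) else fa_mul (Zg a) (coeffs g))"
  unfolding act_def eps_def fa_comm_def
  by (auto simp: minus_falg.rep_eq times_falg.rep_eq Z.rep_eq smul.rep_eq zero_falg.rep_eq fa_diff_def)

lemma Lop_power_unitT:
  "(Lop ^^ s) unitT = (\<lambda>w. if length w = s then coeffs (word_coeff w) else (\<lambda>_. 0))"
proof (induction s)
  case 0 thus ?case by (auto simp: unitT_def one_falg.rep_eq fun_eq_iff)
next
  case (Suc s)
  show ?case
  proof (rule ext)
    fix w :: "idx list"
    have "Lop (\<lambda>w. if length w = s then coeffs (word_coeff w) else (\<lambda>_. 0)) w =
      (if length w = Suc s then coeffs (word_coeff w) else (\<lambda>_. 0))"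
    proof (cases w)
      case Nil thus ?thesis by (simp add: Lop_def tens_add_def ad_lt_def mu_lt_def)
    next
      case (Cons b v)
      thus ?thesis
        by (cases b) (auto simp: Lop_def tens_add_def ad_lt_def mu_lt_def coeffs_act fa_comm_def fa_diff_def)
    qed
    thus "(Lop ^^ Suc s) unitT w = (if length w = Suc s then coeffs (word_coeff w) else (\<lambda>_. 0))"
      using Suc by simp
  qed
qed

section \<open>Flatness: the wedge products of the forms lie in the ideal\<close>

definition quad :: "(idx \<Rightarrow> idx \<Rightarrow> complex) \<Rightarrow> falg" where
  "quad k = (\<Sum>a\<in>UNIV. \<Sum>b\<in>UNIV. smul (k a b) (Z a * Z b))"

lemma quad_add: "quad k1 + quad k2 = quad (\<lambda>a b. k1 a b + k2 a b)"
  unfolding quad_def by (simp add: sum.distrib[symmetric] smul_add_left)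

lemma quad_smul: "smul c (quad k) = quad (\<lambda>a b. c * k a b)"
  unfolding quad_def by (simp add: smul_sum)

lemma quad_diff: "quad k1 - quad k2 = quad (\<lambda>a b. k1 a b - k2 a b)"
proof -
  have "- quad k2 = quad (\<lambda>a b. - k2 a b)"
    unfolding quad_def by (simp add: smul_minus_left sum_negf)
  thus ?thesis by (simp add: diff_conv_add_uminus quad_add del: add_uminus_conv_diff)
qed

definition emat :: "idx \<Rightarrow> idx \<Rightarrow> idx \<Rightarrow> idx \<Rightarrow> complex" where
  "emat a b = (\<lambda>c d. if c = a \<and> d = b then 1 else 0)"

lemma quad_emat: "quad (emat a b) = Z a * Z b"
proof -
  have "\<And>c. (\<Sum>d\<in>UNIV. smul (emat a b c d) (Z c * Z d)) = (if c = a then Z a * Z b else 0)"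
    by (auto simp: emat_def if_distrib[of "\<lambda>k. smul k _"] cong: if_cong)
  thus ?thesis unfolding quad_def by simp
qed

definition commutator :: "falg \<Rightarrow> falg \<Rightarrow> falg" where
  "commutator x y = x * y - y * x"

lemma commutator_Z: "commutator (Z a) (Z b) = quad (\<lambda>c d. emat a b c d - emat b a c d)"
  unfolding commutator_def by (simp add: quad_emat[symmetric] quad_diff)

lemma commutator_diff_left: "commutator (x - y) z = commutator x z - commutator y z"
  unfolding commutator_def by (simp add: algebra_simps)

lemma coeffs_commutator: "coeffs (commutator x y) = fa_comm (coeffs x) (coeffs y)"
  unfolding commutator_def fa_comm_def by (simp add: minus_falg.rep_eq times_falg.rep_eq)

lemma wedge_antisym: "wedge b a p = - wedge a b p"
  unfolding wedge_def by (simp add: algebra_simps)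

text \<open>The coefficient \<open>1/((1-x)(1-y))\<close> of \<open>[Z\<^sub>1\<^sub>1, Z\<^sub>2\<^sub>2]\<close> splits as \<open>c\<^sub>4 + c\<^sub>5 + c\<^sub>6\<close>.\<close>
lemma quad_wedge_as_relations:
  fixes x y :: complex
  assumes "goodpt (x, y)"
  defines "c4 \<equiv> x / ((1 - x) * (1 - x * y))" and "c5 \<equiv> y / ((1 - y) * (1 - x * y))"
    and "c6 \<equiv> 1 / (1 - x * y)"
  shows "quad (\<lambda>a b. wedge a b (x, y)) =
      smul (1 / (x * y)) (commutator (Z I1) (Z I2))
    + smul (1 / ((1 - x) * y)) (commutator (Z I11) (Z I2))
    + smul (1 / (x * (1 - y))) (commutator (Z I1) (Z I22))
    + smul c4 (commutator (Z I11) (Z I22) + commutator (Z I11) (Z I12))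
    + smul c5 (commutator (Z I11) (Z I22) - commutator (Z I22) (Z I12))
    + smul c6 (commutator (Z I11) (Z I22) + commutator (Z I1 - Z I2) (Z I12))"
proof -
  have nz: "x \<noteq> 0" "1 - x \<noteq> 0" "y \<noteq> 0" "1 - y \<noteq> 0" "1 - x * y \<noteq> 0"
    using assms(1) by (auto simp: goodpt_def)
  have partial_fractions: "x / (a * c) + y / (b * c) + 1 / c = 1 / (a * b)"
    if "a \<noteq> 0" "b \<noteq> 0" "c \<noteq> 0" "x * b + y * a + a * b = c" for a b c :: complex
  proof -
    have "x / (a * c) + y / (b * c) + 1 / c = (x * b + y * a + a * b) / (a * b * c)"
      using that(1-3) by (simp add: field_simps)
    thus ?thesis using that by simp
  qed
  have c6: "c6 = 1 / ((1 - x) * (1 - y)) - c4 - c5"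
    unfolding c4_def c5_def c6_def using nz partial_fractions[of "1 - x" "1 - y" "1 - x * y"]
    by (simp add: algebra_simps)
  show ?thesis
    unfolding commutator_diff_left commutator_Z quad_add quad_diff quad_smul
  proof (rule arg_cong[where f = quad], intro ext)
    fix c d :: idx
    show "wedge c d (x, y) =
        1 / (x * y) * (emat I1 I2 c d - emat I2 I1 c d)
      + 1 / ((1 - x) * y) * (emat I11 I2 c d - emat I2 I11 c d)
      + 1 / (x * (1 - y)) * (emat I1 I22 c d - emat I22 I1 c d)
      + c4 * ((emat I11 I22 c d - emat I22 I11 c d) + (emat I11 I12 c d - emat I12 I11 c d))
      + c5 * ((emat I11 I22 c d - emat I22 I11 c d) - (emat I22 I12 c d - emat I12 I22 c d))
      + c6 * ((emat I11 I22 c d - emat I22 I11 c d)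
        + ((emat I1 I12 c d - emat I12 I1 c d) - (emat I2 I12 c d - emat I12 I2 c d)))"
    proof (cases "(c = I11 \<and> d = I22) \<or> (c = I22 \<and> d = I11)")
      case True
      thus ?thesis unfolding c6 by (auto simp: emat_def wedge_def coef_def algebra_simps)
    next
      case False thus ?thesis using nz
        by (cases c; cases d; simp add: emat_def wedge_def coef_def c4_def c5_def c6_def field_simps)
    qed
  qed
qed

lemma quad_wedge_in_J:
  assumes "goodpt p" shows "in_J (quad (\<lambda>a b. wedge a b p))"
proof -
  obtain x y where p: "p = (x, y)" by (cases p)
  have rels: "in_J (commutator (Z I1) (Z I2))" "in_J (commutator (Z I11) (Z I2))"
    "in_J (commutator (Z I1) (Z I22))"
    "in_J (commutator (Z I11) (Z I22) + commutator (Z I11) (Z I12))"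
    "in_J (commutator (Z I11) (Z I22) - commutator (Z I22) (Z I12))"
    "in_J (commutator (Z I11) (Z I22) + commutator (Z I1 - Z I2) (Z I12))"
    by (rule in_J_relation;
        simp add: coeffs_commutator Z.rep_eq U_rels_def plus_falg.rep_eq minus_falg.rep_eq)+
  show ?thesis unfolding p quad_wedge_as_relations[OF assms[unfolded p]]
    by (rule rels in_J_add in_J_smul)+
qed

lemma quad_wedge_eps_in_J: "in_J (quad (\<lambda>c d. wedge d c p * eps d * eps c))"
proof -
  have "smul (- wedge I1 I2 p) (commutator (Z I1) (Z I2)) = quad (\<lambda>c d. wedge d c p * eps d * eps c)"
    unfolding commutator_Z quad_smul
  proof (rule arg_cong[where f = quad], intro ext)
    fix c d :: idx
    show "- wedge I1 I2 p * (emat I1 I2 c d - emat I2 I1 c d) = wedge d c p * eps d * eps c"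
      by (cases c; cases d; simp add: emat_def eps_def wedge_antisym[of I1 I2] wedge_def)
  qed
  moreover have "in_J (commutator (Z I1) (Z I2))"
    by (rule in_J_relation) (simp add: coeffs_commutator Z.rep_eq U_rels_def)
  ultimately show ?thesis by (metis in_J_smul)
qed

text \<open>The terms in which \<open>G\<close> sits between \<open>Z\<^sub>a\<close> and \<open>Z\<^sub>b\<close> cancel by antisymmetry of the wedge.\<close>
lemma act_act_wedge_in_J:
  assumes "goodpt p" "finsupp G"
  shows "in_J (\<Sum>a\<in>UNIV. \<Sum>b\<in>UNIV. smul (wedge a b p) (act a (act b G)))"
proof -
  define w where "w = (\<lambda>a b. wedge a b p)"
  define A where "A = (\<lambda>a b. smul (w a b) (Z a * Z b) * G)"
  define B where "B = (\<lambda>a b. smul (w a b * eps b) (Z a * G * Z b))"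
  define C where "C = (\<lambda>a b. smul (w a b * eps a) (Z b * G * Z a))"
  define D where "D = (\<lambda>a b. G * smul (w a b * eps a * eps b) (Z b * Z a))"
  have "smul (w a b) (act a (act b G)) = A a b - B a b - C a b + D a b" for a b
    unfolding A_def B_def C_def D_def act_act by (simp add: mult.assoc)
  hence "(\<Sum>a\<in>UNIV. \<Sum>b\<in>UNIV. smul (w a b) (act a (act b G)))
      = (\<Sum>a\<in>UNIV. \<Sum>b\<in>UNIV. A a b) - (\<Sum>a\<in>UNIV. \<Sum>b\<in>UNIV. B a b)
        - (\<Sum>a\<in>UNIV. \<Sum>b\<in>UNIV. C a b) + (\<Sum>a\<in>UNIV. \<Sum>b\<in>UNIV. D a b)"
    by (simp add: sum.distrib sum_subtractf)
  also have "(\<Sum>a\<in>UNIV. \<Sum>b\<in>UNIV. C a b) = - (\<Sum>a\<in>UNIV. \<Sum>b\<in>UNIV. B a b)"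
  proof -
    have "C a b = - B b a" for a b
      unfolding B_def C_def w_def using wedge_antisym[of b a p] by (simp add: smul_minus_left)
    hence "(\<Sum>b\<in>UNIV. \<Sum>a\<in>UNIV. C a b) = - (\<Sum>b\<in>UNIV. \<Sum>a\<in>UNIV. B b a)"
      by (simp add: sum_negf)
    thus ?thesis by (subst sum.swap) simp
  qed
  also have "(\<Sum>a\<in>UNIV. \<Sum>b\<in>UNIV. A a b) = quad w * G"
    unfolding A_def quad_def by (simp add: sum_distrib_right)
  also have "(\<Sum>a\<in>UNIV. \<Sum>b\<in>UNIV. D a b) = G * quad (\<lambda>c d. w d c * eps d * eps c)"
    unfolding D_def quad_def by (subst sum.swap) (simp add: sum_distrib_left)
  finally have "(\<Sum>a\<in>UNIV. \<Sum>b\<in>UNIV. smul (w a b) (act a (act b G))) =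
      quad w * G + G * quad (\<lambda>c d. w d c * eps d * eps c)" by simp
  moreover have "in_J (quad w * G + G * quad (\<lambda>c d. w d c * eps d * eps c))"
    unfolding w_def using quad_wedge_in_J[OF assms(1)] quad_wedge_eps_in_J assms(2)
    by (intro in_J_add in_J_mult_left in_J_mult_right)
  ultimately show ?thesis unfolding w_def by simp
qed

section \<open>Chen's defect of the coefficients lies in the ideal\<close>

lemma finite_words_length: "finite {I::idx list. length I = n}"
  using finite_lists_length_eq[of "UNIV :: idx set" n] by simp

lemma sum_words_length_Suc:
  "(\<Sum>I\<in>{I::idx list. length I = Suc n}. f I) = (\<Sum>a\<in>UNIV. \<Sum>I\<in>{I. length I = n}. f (a # I))"
proof -
  have "{I::idx list. length I = Suc n} = (\<lambda>(a, I). a # I) ` (UNIV \<times> {I. length I = n})"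
    by (auto simp: length_Suc_conv)
  moreover have "inj_on (\<lambda>(a, I). a # I) (UNIV \<times> {I::idx list. length I = n})"
    by (auto simp: inj_on_def)
  ultimately show ?thesis
    by (simp add: sum.reindex sum.cartesian_product case_prod_unfold)
qed

lemma sum_swap3: "(\<Sum>a\<in>A. \<Sum>b\<in>B. \<Sum>c\<in>C. f a b c) = (\<Sum>c\<in>C. \<Sum>a\<in>A. \<Sum>b\<in>B. f a b c)"
  by (subst sum.swap) (simp only: sum.swap[of _ B C])

lemma mform_Cons:
  assumes "1 \<le> l"
  shows "mform (a # I) (Suc l) x j = coef a (x 0) (j 0) * mform I l (\<lambda>k. x (Suc k)) (\<lambda>k. j (Suc k))"
proof -
  obtain m where l: "l = Suc m" using assms by (cases l) auto
  have head: "(\<Prod>k<l. coef ((a # I) ! k) (x k) (j k)) =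
      coef a (x 0) (j 0) * (\<Prod>k<m. coef (I ! k) (x (Suc k)) (j (Suc k)))"
    unfolding l by (subst prod.lessThan_Suc_shift) simp
  have tail: "(\<Prod>k\<in>{Suc l..<length I}. coef ((a # I) ! Suc k) (x k) (j k)) =
      (\<Prod>k\<in>{l..<length I - 1}. coef (I ! Suc k) (x (Suc k)) (j (Suc k)))"
  proof (cases "length I")
    case (Suc n)
    have "(\<Prod>k\<in>{Suc l..<length I}. coef ((a # I) ! Suc k) (x k) (j k)) =
        (\<Prod>k\<in>{Suc l..<Suc n}. coef (I ! k) (x k) (j k))"
      using Suc by (simp only: nth_Cons_Suc)
    also have "\<dots> = (\<Prod>k\<in>{l..<n}. coef (I ! Suc k) (x (Suc k)) (j (Suc k)))"
      by (rule prod.shift_bounds_Suc_ivl)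
    finally show ?thesis using Suc by (simp only: diff_Suc_1)
  qed simp
  show ?thesis unfolding mform_def using head tail by (simp add: l)
qed

lemma mform_first_slot:
  "mform (a # b # q) 1 x j = wedge a b (x 0) * (\<Prod>k\<in>{1..<Suc (length q)}. coef (q ! (k - 1)) (x k) (j k))"
proof -
  have "(\<Prod>k\<in>{1..<Suc (length q)}. coef ((a # b # q) ! Suc k) (x k) (j k)) =
        (\<Prod>k\<in>{1..<Suc (length q)}. coef (q ! (k - 1)) (x k) (j k))"
    by (rule prod.cong) (auto simp: nth_Cons')
  thus ?thesis unfolding mform_def by simp
qed

text \<open>With the wedge in the first slot, the rest of the word is a common factor of
  \<open>act_act_wedge_in_J\<close>.\<close>
lemma chen_defect_first_slot_in_J:
  assumes "goodpt (x 0)"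
  shows "in_J (\<Sum>I\<in>{I. length I = Suc (Suc n)}. smul (mform I 1 x j) (word_coeff I))"
proof -
  define cq where "cq = (\<lambda>q::idx list. \<Prod>k\<in>{1..<Suc (length q)}. coef (q ! (k - 1)) (x k) (j k))"
  have first_slot: "mform (a # b # q) (Suc 0) x j = cq q * wedge a b (x 0)" for a b q
    using mform_first_slot[of a b q x j] unfolding cq_def by (simp add: mult.commute)
  have "(\<Sum>I\<in>{I. length I = Suc (Suc n)}. smul (mform I 1 x j) (word_coeff I)) =
      (\<Sum>a\<in>UNIV. \<Sum>b\<in>UNIV. \<Sum>q\<in>{I. length I = n}.
         smul (cq q) (smul (wedge a b (x 0)) (act a (act b (word_coeff q)))))"
    by (simp add: sum_words_length_Suc first_slot)
  also have "\<dots> = (\<Sum>q\<in>{I. length I = n}.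
      smul (cq q) (\<Sum>a\<in>UNIV. \<Sum>b\<in>UNIV. smul (wedge a b (x 0)) (act a (act b (word_coeff q)))))"
    by (subst sum_swap3) (simp add: smul_sum)
  finally show ?thesis using act_act_wedge_in_J assms by (simp add: in_J_sum in_J_smul)
qed

text \<open>The letters in front of the wedge only apply \<open>act\<close>, which preserves \<open>J\<close>.\<close>
lemma chen_defect_in_J:
  "1 \<le> l \<Longrightarrow> l < s \<Longrightarrow> (\<forall>k. goodpt (x k)) \<Longrightarrow>
   in_J (\<Sum>I\<in>{I. length I = s}. smul (mform I l x j) (word_coeff I))"
proof (induction l arbitrary: s x j)
  case (Suc l)
  show ?case
  proof (cases "l = 0")
    case True
    then obtain n where "s = Suc (Suc n)" using Suc.prems(2) by (auto simp: less_iff_Suc_add)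
    thus ?thesis using chen_defect_first_slot_in_J Suc.prems(3) True by simp
  next
    case False
    obtain s' where s: "s = Suc s'" using Suc.prems by (cases s) auto
    have l: "1 \<le> l" "l < s'" using False Suc.prems s by auto
    have "(\<Sum>I\<in>{I. length I = s}. smul (mform I (Suc l) x j) (word_coeff I)) =
        (\<Sum>a\<in>UNIV. smul (coef a (x 0) (j 0)) (act a (\<Sum>I\<in>{I. length I = s'}.
           smul (mform I l (\<lambda>k. x (Suc k)) (\<lambda>k. j (Suc k))) (word_coeff I))))"
      unfolding s by (simp add: sum_words_length_Suc mform_Cons[OF l(1)] act_sum act_smul smul_sum)
    moreover have "in_J (\<Sum>I\<in>{I. length I = s'}.
        smul (mform I l (\<lambda>k. x (Suc k)) (\<lambda>k. j (Suc k))) (word_coeff I))"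
      using Suc.IH[OF l] Suc.prems(3) by simp
    ultimately show ?thesis by (simp add: in_J_sum in_J_smul in_J_act)
  qed
qed simp

section \<open>Gaussian elimination modulo a subspace\<close>

definition annihilated :: "'a set \<Rightarrow> ('a \<Rightarrow> complex) set \<Rightarrow> ('a \<Rightarrow> complex) \<Rightarrow> bool" where
  "annihilated S \<Phi> b \<longleftrightarrow> (\<forall>w. w \<notin> S \<longrightarrow> b w = 0) \<and> (\<forall>m\<in>\<Phi>. (\<Sum>I\<in>S. m I * b I) = 0)"

definition annihilated_tensors :: "idx list set \<Rightarrow> (idx list \<Rightarrow> complex) set \<Rightarrow> tens set" where
  "annihilated_tensors S \<Phi> = {(\<lambda>w u. b w * F u) | b F. annihilated S \<Phi> b \<and> fin_supp F}"

definition splits_mod :: "fa set \<Rightarrow> idx list set \<Rightarrow> (idx list \<Rightarrow> complex) set \<Rightarrow> tens \<Rightarrow> bool" where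
  "splits_mod J S \<Phi> T \<longleftrightarrow> (\<exists>y z. y \<in> tspan (annihilated_tensors S \<Phi>) \<and>
      (\<forall>w. w \<notin> S \<longrightarrow> z w = (\<lambda>_. 0)) \<and> (\<forall>w. z w \<in> J) \<and> T = (\<lambda>w u. y w u + z w u))"

lemma splits_modI:
  "y \<in> tspan (annihilated_tensors S \<Phi>) \<Longrightarrow> \<forall>w. w \<notin> S \<longrightarrow> z w = (\<lambda>_. 0) \<Longrightarrow> \<forall>w. z w \<in> J
    \<Longrightarrow> T = (\<lambda>w u. y w u + z w u) \<Longrightarrow> splits_mod J S \<Phi> T"
  unfolding splits_mod_def by (intro exI[of _ y] exI[of _ z] conjI)

lemma splits_modE:
  assumes "splits_mod J S \<Phi> T"
  obtains y z where "y \<in> tspan (annihilated_tensors S \<Phi>)" "\<forall>w. w \<notin> S \<longrightarrow> z w = (\<lambda>_. 0)"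
    "\<forall>w. z w \<in> J" "T = (\<lambda>w u. y w u + z w u)"
  using assms unfolding splits_mod_def by (elim exE conjE) (rule that)

lemma tspan_mono: "t \<in> tspan G \<Longrightarrow> G \<subseteq> H \<Longrightarrow> t \<in> tspan H"
  by (induction rule: tspan.induct) (auto intro: tspan.intros)

lemma annihilated_insert:
  "finite S \<Longrightarrow> a \<notin> S \<Longrightarrow> annihilated S \<Phi> b \<Longrightarrow> annihilated (insert a S) \<Phi> b"
  unfolding annihilated_def by auto

lemma annihilated_tensors_insert:
  "finite S \<Longrightarrow> a \<notin> S \<Longrightarrow> annihilated_tensors S \<Phi> \<subseteq> annihilated_tensors (insert a S) \<Phi>"
  unfolding annihilated_tensors_def by (fastforce dest: annihilated_insert)

text \<open>A column on which every constraint vanishes is free: \<open>e\<^sub>a \<otimes> T a\<close> is annihilated.\<close>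
lemma splits_mod_insert_free:
  assumes "finite S" "a \<notin> S" "\<forall>m\<in>\<Phi>. m a = 0" "fin_supp (T a)"
    and "splits_mod (cspan G) S \<Phi> (\<lambda>w. if w \<in> S then T w else (\<lambda>_. 0))"
    and "\<forall>w. w \<notin> insert a S \<longrightarrow> T w = (\<lambda>_. 0)"
  shows "splits_mod (cspan G) (insert a S) \<Phi> T"
proof -
  obtain y' z where yz: "y' \<in> tspan (annihilated_tensors S \<Phi>)" "\<forall>w. w \<notin> S \<longrightarrow> z w = (\<lambda>_. 0)"
    "\<forall>w. z w \<in> cspan G" "(\<lambda>w. if w \<in> S then T w else (\<lambda>_. 0)) = (\<lambda>w u. y' w u + z w u)"
    using assms(5) by (rule splits_modE)
  define e where "e = (\<lambda>w::idx list. if w = a then (1::complex) else 0)"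
  have "annihilated (insert a S) \<Phi> e"
    unfolding annihilated_def e_def using assms(1-3) by (auto simp: if_distrib cong: if_cong)
  hence "(\<lambda>w u. e w * T a u) \<in> annihilated_tensors (insert a S) \<Phi>"
    using assms(4) unfolding annihilated_tensors_def by auto
  moreover have "y' \<in> tspan (annihilated_tensors (insert a S) \<Phi>)"
    using tspan_mono[OF yz(1) annihilated_tensors_insert[OF assms(1,2)]] .
  ultimately have y: "(\<lambda>w u. 1 * (e w * T a u) + y' w u) \<in> tspan (annihilated_tensors (insert a S) \<Phi>)"
    by (rule tspan.tspan_step)
  have z: "\<forall>w. w \<notin> insert a S \<longrightarrow> z w = (\<lambda>_. 0)" using yz(2) by auto
  have "T = (\<lambda>w u. (1 * (e w * T a u) + y' w u) + z w u)"
  proof (intro ext)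
    fix w u
    have "T w u = (if w = a then T a u else 0) + y' w u + z w u"
      using fun_cong[OF fun_cong[OF yz(4), of w], of u] assms(2,6) by (auto split: if_splits)
    thus "T w u = (1 * (e w * T a u) + y' w u) + z w u" unfolding e_def by simp
  qed
  with y z yz(3) show ?thesis by (intro splits_modI)
qed

lemma tspan_eliminate:
  assumes "t \<in> tspan (annihilated_tensors S \<Phi>')" "finite S" "a \<notin> S"
    and "\<Phi>' = (\<lambda>m I. m I - n I * m a) ` \<Phi>"
  shows "(\<lambda>w u. if w = a then - (\<Sum>I\<in>S. n I * t I u) else t w u)
    \<in> tspan (annihilated_tensors (insert a S) \<Phi>)"
  using assms(1)
proof (induction rule: tspan.induct)
  case tspan_zero
  have zero: "(\<lambda>w u. if w = a then - (\<Sum>I\<in>S. n I * 0) else 0) = (\<lambda>_ _. (0::complex))"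
    by (simp add: fun_eq_iff)
  show ?case by (subst zero) (rule tspan.tspan_zero)
next
  case (tspan_step g t c)
  then obtain b F where g: "g = (\<lambda>w u. b w * F u)" "annihilated S \<Phi>' b" "fin_supp F"
    unfolding annihilated_tensors_def by auto
  define b' where "b' = (\<lambda>w. if w = a then - (\<Sum>I\<in>S. n I * b I) else b w)"
  have "annihilated (insert a S) \<Phi> b'"
    unfolding annihilated_def
  proof (intro conjI allI impI ballI)
    fix w assume "w \<notin> insert a S"
    thus "b' w = 0" using g(2) unfolding b'_def annihilated_def by auto
  next
    fix m assume "m \<in> \<Phi>"
    hence "(\<lambda>I. m I - n I * m a) \<in> \<Phi>'" using assms(4) by auto
    hence "(\<Sum>I\<in>S. (m I - n I * m a) * b I) = 0" using g(2) unfolding annihilated_def by auto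
    moreover have "(\<Sum>I\<in>insert a S. m I * b' I) = m a * b' a + (\<Sum>I\<in>S. m I * b' I)"
      using assms(2,3) by simp
    moreover have "(\<Sum>I\<in>S. m I * b' I) = (\<Sum>I\<in>S. m I * b I)"
      using assms(3) unfolding b'_def by (intro sum.cong) auto
    moreover have "m a * b' a + (\<Sum>I\<in>S. m I * b I) = (\<Sum>I\<in>S. (m I - n I * m a) * b I)"
      unfolding b'_def by (simp add: sum_subtractf sum_distrib_left algebra_simps)
    ultimately show "(\<Sum>I\<in>insert a S. m I * b' I) = 0" by simp
  qed
  hence "(\<lambda>w u. b' w * F u) \<in> annihilated_tensors (insert a S) \<Phi>"
    using g(3) unfolding annihilated_tensors_def by auto
  moreover have "(\<lambda>w u. if w = a then - (\<Sum>I\<in>S. n I * (c * g I u + t I u)) else c * g w u + t w u) =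
      (\<lambda>w u. c * (b' w * F u) + (if w = a then - (\<Sum>I\<in>S. n I * t I u) else t w u))"
    unfolding g(1) b'_def
    by (auto simp: fun_eq_iff sum.distrib sum_distrib_left sum_distrib_right algebra_simps)
  ultimately show ?case using tspan.tspan_step[OF _ tspan_step.IH, of _ c] by simp
qed

lemma splits_mod_insert_pivot:
  assumes "finite S" "a \<notin> S" "n a = 1" "(\<lambda>u. \<Sum>I\<in>insert a S. n I * T I u) \<in> cspan G"
    and "splits_mod (cspan G) S ((\<lambda>m I. m I - n I * m a) ` \<Phi>) (\<lambda>w. if w \<in> S then T w else (\<lambda>_. 0))"
    and "\<forall>w. w \<notin> insert a S \<longrightarrow> T w = (\<lambda>_. 0)"
  shows "splits_mod (cspan G) (insert a S) \<Phi> T"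
proof -
  obtain y' z' where yz: "y' \<in> tspan (annihilated_tensors S ((\<lambda>m I. m I - n I * m a) ` \<Phi>))"
    "\<forall>w. w \<notin> S \<longrightarrow> z' w = (\<lambda>_. 0)" "\<forall>w. z' w \<in> cspan G"
    "(\<lambda>w. if w \<in> S then T w else (\<lambda>_. 0)) = (\<lambda>w u. y' w u + z' w u)"
    using assms(5) by (rule splits_modE)
  have T_S: "T w u = y' w u + z' w u" if "w \<in> S" for w u
    using fun_cong[OF fun_cong[OF yz(4), of w], of u] that by simp
  define y where "y = (\<lambda>w u. if w = a then - (\<Sum>I\<in>S. n I * y' I u) else y' w u)"
  define z where "z = (\<lambda>w. if w = a then (\<lambda>u. (\<Sum>I\<in>insert a S. n I * T I u)
    + (- 1) * (\<Sum>I\<in>S. n I * z' I u)) else z' w)"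
  have "y \<in> tspan (annihilated_tensors (insert a S) \<Phi>)"
    unfolding y_def using tspan_eliminate[OF yz(1) assms(1,2) refl] .
  moreover have "\<forall>w. w \<notin> insert a S \<longrightarrow> z w = (\<lambda>_. 0)" using yz(2) unfolding z_def by auto
  moreover have "\<forall>w. z w \<in> cspan G"
  proof -
    have "(\<lambda>u. \<Sum>I\<in>S. n I * z' I u) \<in> cspan G" using yz(3) assms(1) by (intro cspan_sum) auto
    hence "(\<lambda>u. (\<Sum>I\<in>insert a S. n I * T I u) + (- 1) * (\<Sum>I\<in>S. n I * z' I u)) \<in> cspan G"
      using assms(4) by (intro cspan_add cspan_smult)
    thus ?thesis using yz(3) unfolding z_def by simp
  qed
  moreover have "T = (\<lambda>w u. y w u + z w u)"
  proof (intro ext)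
    fix w u
    show "T w u = y w u + z w u"
    proof (cases "w = a")
      case True
      have "(\<Sum>I\<in>S. n I * T I u) = (\<Sum>I\<in>S. n I * y' I u) + (\<Sum>I\<in>S. n I * z' I u)"
        by (simp add: T_S distrib_left sum.distrib)
      thus ?thesis using True assms(1-3) unfolding y_def z_def by simp
    next
      case False
      thus ?thesis using fun_cong[OF fun_cong[OF yz(4), of w], of u] assms(6)
        unfolding y_def z_def by (auto split: if_splits)
    qed
  qed
  ultimately show ?thesis by (rule splits_modI)
qed

lemma row_reduced_constraints_in_cspan:
  assumes "finite S" "a \<notin> S" "\<forall>m\<in>\<Phi>. (\<lambda>u. \<Sum>I\<in>insert a S. m I * T I u) \<in> cspan G"
    and "(\<lambda>u. \<Sum>I\<in>insert a S. n I * T I u) \<in> cspan G" "n a = 1"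
  shows "\<forall>m'\<in>(\<lambda>m I. m I - n I * m a) ` \<Phi>. (\<lambda>u. \<Sum>I\<in>S. m' I * T I u) \<in> cspan G"
proof
  fix m' assume "m' \<in> (\<lambda>m I. m I - n I * m a) ` \<Phi>"
  then obtain m where m: "m \<in> \<Phi>" "m' = (\<lambda>I. m I - n I * m a)" by auto
  have "(\<lambda>u. \<Sum>I\<in>S. m' I * T I u) =
      (\<lambda>u. (\<Sum>I\<in>insert a S. m I * T I u) + (- m a) * (\<Sum>I\<in>insert a S. n I * T I u))"
    using assms(1,2,5) unfolding m(2)
    by (simp add: sum_subtractf sum_distrib_left sum_negf algebra_simps)
  thus "(\<lambda>u. \<Sum>I\<in>S. m' I * T I u) \<in> cspan G"
    using cspan_add[OF assms(3)[rule_format, OF m(1)] cspan_smult[OF assms(4), of "- m a"]] by simp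
qed

lemma splits_mod_if_constraints_in_cspan:
  assumes "finite S" "\<forall>w. w \<notin> S \<longrightarrow> T w = (\<lambda>_. 0)" "\<forall>w. fin_supp (T w)"
    and "\<forall>m\<in>\<Phi>. (\<lambda>u. \<Sum>I\<in>S. m I * T I u) \<in> cspan G"
  shows "splits_mod (cspan G) S \<Phi> T"
  using assms
proof (induction S arbitrary: T \<Phi> rule: finite_induct)
  case empty
  show ?case using empty.prems(1)
    by (intro splits_modI[where y = "\<lambda>_ _. 0" and z = "\<lambda>_ _. 0"] tspan.tspan_zero)
       (auto intro: cspan.cspan_zero)
next
  case (insert a S)
  define T' where "T' = (\<lambda>w. if w \<in> S then T w else (\<lambda>_. 0))"
  have T': "\<forall>w. w \<notin> S \<longrightarrow> T' w = (\<lambda>_. 0)" "\<forall>w. fin_supp (T' w)"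
    using insert.prems(2) unfolding T'_def by (auto simp: fin_supp_def)
  have T'_sum: "(\<Sum>I\<in>S. f I * T' I u) = (\<Sum>I\<in>S. f I * T I u)" for f u
    unfolding T'_def by (rule sum.cong) auto
  show ?case
  proof (cases "\<forall>m\<in>\<Phi>. m a = 0")
    case True
    have "\<forall>m\<in>\<Phi>. (\<lambda>u. \<Sum>I\<in>S. m I * T' I u) \<in> cspan G"
    proof
      fix m assume m: "m \<in> \<Phi>"
      show "(\<lambda>u. \<Sum>I\<in>S. m I * T' I u) \<in> cspan G"
        using insert.prems(3)[rule_format, OF m] insert.hyps True[rule_format, OF m]
        by (simp add: T'_sum)
    qed
    from insert.IH[OF T' this, unfolded T'_def] show ?thesis
      using insert.prems(1,2) by (intro splits_mod_insert_free[OF insert.hyps True]) auto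
  next
    case False
    then obtain m0 where m0: "m0 \<in> \<Phi>" "m0 a \<noteq> 0" by auto
    define n where "n = (\<lambda>I. m0 I / m0 a)"
    have pivot: "(\<lambda>u. \<Sum>I\<in>insert a S. n I * T I u) \<in> cspan G"
      using cspan_smult[OF insert.prems(3)[rule_format, OF m0(1)], of "1 / m0 a"]
      unfolding n_def by (simp add: sum_distrib_left)
    have "n a = 1" using m0(2) unfolding n_def by simp
    have "\<forall>m'\<in>(\<lambda>m I. m I - n I * m a) ` \<Phi>. (\<lambda>u. \<Sum>I\<in>S. m' I * T' I u) \<in> cspan G"
      using row_reduced_constraints_in_cspan[OF insert.hyps insert.prems(3) pivot \<open>n a = 1\<close>]
      by (simp add: T'_sum)
    from insert.IH[OF T' this, unfolded T'_def] insert.prems(1)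
    show ?thesis by (rule splits_mod_insert_pivot[OF insert.hyps \<open>n a = 1\<close> pivot])
  qed
qed

text \<open>Linear constraints cutting out the degree \<open>s\<close> part of \<open>\<B>\<^sup>0\<close>.\<close>
definition B0_constraints :: "nat \<Rightarrow> (idx list \<Rightarrow> complex) set" where
  "B0_constraints s = {(\<lambda>I. mform I l x j) | l x j. 1 \<le> l \<and> l < s \<and> (\<forall>k. goodpt (x k))}
     \<union> {(\<lambda>I. if I = w then 1 else 0) | w. w \<noteq> [] \<and> last w \<in> {I1, I2}}"

lemma sum_delta_mult:
  "finite S \<Longrightarrow> (\<Sum>I\<in>S. (if I = w then 1 else 0) * f I) = (if w \<in> S then f w else (0::complex))"
  by (simp add: if_distrib[of "\<lambda>c. c * _"] sum.delta' cong: if_cong)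

lemma chenB0_if_annihilated:
  assumes "annihilated {I. length I = s} (B0_constraints s) b"
  shows "b \<in> chenB0"
proof -
  have supp: "b w = 0" if "length w \<noteq> s" for w
    using assms that unfolding annihilated_def by auto
  have killed: "\<forall>m\<in>B0_constraints s. (\<Sum>I\<in>{I. length I = s}. m I * b I) = 0"
    using assms unfolding annihilated_def by blast
  have "chen b s" unfolding chen_def
  proof (intro allI impI)
    fix l :: nat and x :: "nat \<Rightarrow> complex \<times> complex" and j :: "nat \<Rightarrow> bool"
    assume "1 \<le> l \<and> l < s" "\<forall>k. goodpt (x k)"
    hence "(\<lambda>I. mform I l x j) \<in> B0_constraints s" unfolding B0_constraints_def by blast
    from killed[rule_format, OF this]
    show "(\<Sum>I\<in>{I. length I = s}. b I * mform I l x j) = 0" by (simp add: mult.commute)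
  qed
  moreover have "homogeneous b s" unfolding homogeneous_def using supp by auto
  ultimately have "b \<in> chenB" unfolding chenB_def by (intro cspan_gen) blast
  moreover have "last w \<notin> {I1, I2}" if "b w \<noteq> 0" "w \<noteq> []" for w
  proof
    assume "last w \<in> {I1, I2}"
    hence "(\<lambda>I. if I = w then 1 else 0) \<in> B0_constraints s"
      using that(2) unfolding B0_constraints_def by blast
    from killed[rule_format, OF this] have "b w = 0"
      using supp[of w] by (simp add: sum_delta_mult finite_words_length split: if_splits)
    thus False using that(1) by simp
  qed
  ultimately show ?thesis unfolding chenB0_def by blast
qed

lemma B0_constraints_word_coeff_in_U_ideal:
  assumes "m \<in> B0_constraints s"
  shows "(\<lambda>u. \<Sum>I\<in>{I. length I = s}. m I * coeffs (word_coeff I) u) \<in> U_ideal"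
  using assms unfolding B0_constraints_def
proof (elim UnE CollectE exE conjE)
  fix l x j assume "m = (\<lambda>I. mform I l x j)" "1 \<le> l" "l < s" "\<forall>k. goodpt (x k)"
  thus ?thesis using chen_defect_in_J[of l s x j]
    unfolding in_J_def coeffs_sum smul.rep_eq by simp
next
  fix w assume m: "m = (\<lambda>I. if I = w then 1 else 0)" and "w \<noteq> []" "last w \<in> {I1, I2}"
  hence "word_coeff w = 0" by (rule_tac word_coeff_last_letter_zero)
  hence "(\<lambda>u. \<Sum>I\<in>{I. length I = s}. m I * coeffs (word_coeff I) u) = (\<lambda>_. 0)"
    unfolding m by (simp add: sum_delta_mult finite_words_length zero_falg.rep_eq fun_eq_iff)
  thus ?thesis unfolding U_ideal_def by (simp add: cspan.cspan_zero)
qed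

lemma in_B0_U_if_splits_mod:
  assumes "finite S" "\<And>b. annihilated S \<Phi> b \<Longrightarrow> b \<in> chenB0" "splits_mod U_ideal S \<Phi> T"
  shows "in_B0_U T"
proof -
  obtain y z where yz: "y \<in> tspan (annihilated_tensors S \<Phi>)" "\<forall>w. w \<notin> S \<longrightarrow> z w = (\<lambda>_. 0)"
    "\<forall>w. z w \<in> U_ideal" "T = (\<lambda>w u. y w u + z w u)"
    using assms(3) by (rule splits_modE)
  have "y \<in> tspan {(\<lambda>w u. b w * F u) | b F. b \<in> chenB0 \<and> fin_supp F}"
    using yz(1) by (rule tspan_mono) (auto simp: annihilated_tensors_def intro: assms(2))
  moreover have "finite {w. z w \<noteq> (\<lambda>_. 0)}"
    using yz(2) assms(1) by (auto intro: finite_subset)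
  ultimately show ?thesis unfolding in_B0_U_def using yz(3,4) by blast
qed

theorem proposition6p2:
  fixes s :: nat
  shows "in_B0_U ((Lop ^^ s) unitT)"
proof -
  let ?T = "(Lop ^^ s) unitT" and ?S = "{I::idx list. length I = s}"
  have supp: "\<forall>w. w \<notin> ?S \<longrightarrow> ?T w = (\<lambda>_. 0)" by (simp add: Lop_power_unitT)
  have fin: "\<forall>w. fin_supp (?T w)"
    using finsupp_word_coeff by (simp add: Lop_power_unitT finsupp_def fin_supp_def)
  have "(\<Sum>I\<in>?S. m I * ?T I u) = (\<Sum>I\<in>?S. m I * coeffs (word_coeff I) u)" for m u
    by (rule sum.cong) (simp_all add: Lop_power_unitT)
  hence "\<forall>m\<in>B0_constraints s. (\<lambda>u. \<Sum>I\<in>?S. m I * ?T I u) \<in> U_ideal"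
    using B0_constraints_word_coeff_in_U_ideal by simp
  from splits_mod_if_constraints_in_cspan[OF finite_words_length supp fin this[unfolded U_ideal_def]]
  have "splits_mod U_ideal ?S (B0_constraints s) ?T" unfolding U_ideal_def .
  with finite_words_length chenB0_if_annihilated show ?thesis by (rule in_B0_U_if_splits_mod)
qed

end
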